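(* Let $\Sigma=\{\sigma_{\mathbf{a}|\mathbf{x}}\}$ be a no-signaling assemblage of operators acting on $\mathbb{C}^d$. If there exists a local deterministic box $L$ such that $\sum_{\mathbf{a}|\mathbf{x}\in I_L}\mathrm{rank}(\sigma_{\mathbf{a}|\mathbf{x}})>(|I_L|-1)d$, then $\Sigma$ is not on the edge of the set of no-signaling assemblages.
   Context: Fix $n\ge 1$, integers $\mathcal{A}_i,\mathcal{X}_i\ge 1$ and $d\ge1$; write $\mathbf{a}|\mathbf{x}=a_1\dots a_n|x_1\dots x_n$ with $a_i\in\{0,\dots,\mathcal{A}_i-1\}$, $x_i\in\{0,\dots,\mathcal{X}_i-1\}$. A no-signaling assemblage is a collection of positive semidefinite operators $\sigma_{\mathbf{a}|\mathbf{x}}$ on $\mathbb{C}^d$ with $\sum_{\mathbf{a}}\sigma_{\mathbf{a}|\mathbf{x}}=\rho_B$ for all $\mathbf{x}$ ($\rho_B$ a fixed density operator) and such that for every $I=\{i_1,\dots,i_s\}\subset\{1,\dots,n\}$, $1\le s<n$, the sum $\sum_{a_j:\,j\notin I}\sigma_{\mathbf{a}|\mathbf{x}}$ depends only on $a_{i_k},x_{i_k}$. A local deterministic box $L$ is given by functions $f_i:\{0,\dots,\mathcal{X}_i-1\}\to\{0,\dots,\mathcal{A}_i-1\}$ via $p_L(\mathbf{a}|\mathbf{x})=\prod_i\delta_{a_i,f_i(x_i)}$; $I_L=\{\mathbf{a}|\mathbf{x}:p_L(\mathbf{a}|\mathbf{x})\ne0\}$ (so $|I_L|=\prod_i\mathcal{X}_i$).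 An LHS assemblage is one of the form $\sigma_{\mathbf{a}|\mathbf{x}}=\sum_j q_j\prod_i p^{(A_i)}_j(a_i|x_i)\rho_j$ with probability weights $q_j$, density operators $\rho_j$ and conditional distributions $p^{(A_i)}_j$. $\Sigma$ is on the edge if any decomposition $\Sigma=\epsilon\Sigma_1+(1-\epsilon)\Sigma_2$ with $\epsilon\in[0,1]$, $\Sigma_1$ LHS and $\Sigma_2$ no-signaling forces $\epsilon=0$. *)

theory Defs
  imports "HOL-Analysis.Analysis"
begin

type_synonym 'd cmat = "complex^'d^'d"

definition psd :: "'d::finite cmat \<Rightarrow> bool" where
  "psd M \<longleftrightarrow> (\<forall>v::complex^'d.
     let q = (\<Sum>i\<in>UNIV. cnj (v $ i) * (M *v v) $ i) in Im q = 0 \<and> Re q \<ge> 0)"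

definition density :: "'d::finite cmat \<Rightarrow> bool" where
  "density M \<longleftrightarrow> psd M \<and> trace M = 1"

definition cfg :: "nat \<Rightarrow> (nat \<Rightarrow> nat) \<Rightarrow> (nat \<Rightarrow> nat) set" where
  "cfg n B = {c. (\<forall>i<n. c i < B i) \<and> (\<forall>i\<ge>n. c i = 0)}"

type_synonym 'd assemblage = "(nat \<Rightarrow> nat) \<Rightarrow> (nat \<Rightarrow> nat) \<Rightarrow> 'd cmat"

definition marginal :: "nat \<Rightarrow> (nat \<Rightarrow> nat) \<Rightarrow> 'd::finite assemblage \<Rightarrow> nat set
     \<Rightarrow> (nat \<Rightarrow> nat) \<Rightarrow> (nat \<Rightarrow> nat) \<Rightarrow> 'd cmat" where
  "marginal n A \<sigma> I a x = (\<Sum>b\<in>{b\<in>cfg n A. \<forall>i\<in>I. b i = a i}. \<sigma> b x)"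

definition no_signaling ::
  "nat \<Rightarrow> (nat \<Rightarrow> nat) \<Rightarrow> (nat \<Rightarrow> nat) \<Rightarrow> 'd::finite assemblage \<Rightarrow> bool" where
  "no_signaling n A X \<sigma> \<longleftrightarrow>
     (\<forall>a\<in>cfg n A. \<forall>x\<in>cfg n X. psd (\<sigma> a x)) \<and>
     (\<exists>\<rho>. density \<rho> \<and> (\<forall>x\<in>cfg n X. (\<Sum>a\<in>cfg n A. \<sigma> a x) = \<rho>)) \<and>
     (\<forall>I. I \<subseteq> {0..<n} \<and> 1 \<le> card I \<and> card I < n \<longrightarrow>
        (\<forall>a\<in>cfg n A. \<forall>a'\<in>cfg n A. \<forall>x\<in>cfg n X. \<forall>x'\<in>cfg n X.
           (\<forall>i\<in>I. a i = a' i \<and> x i = x' i) \<longrightarrow>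
           marginal n A \<sigma> I a x = marginal n A \<sigma> I a' x'))"

text \<open>LHS assemblage: finite mixture sum_j q_j prod_i p_j^(i)(a_i|x_i) rho_j.
  p j i a x is the conditional probability p_j^(A_i)(a|x).\<close>
definition LHS ::
  "nat \<Rightarrow> (nat \<Rightarrow> nat) \<Rightarrow> (nat \<Rightarrow> nat) \<Rightarrow> 'd::finite assemblage \<Rightarrow> bool" where
  "LHS n A X \<sigma> \<longleftrightarrow>
     (\<exists>(m::nat) (q::nat \<Rightarrow> real) (\<rho>::nat \<Rightarrow> 'd cmat) (p::nat \<Rightarrow> nat \<Rightarrow> nat \<Rightarrow> nat \<Rightarrow> real).
        (\<forall>j<m. q j \<ge> 0) \<and> (\<Sum>j<m. q j) = 1 \<and>
        (\<forall>j<m. density (\<rho> j)) \<and>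
        (\<forall>j<m. \<forall>i<n. \<forall>x<X i. (\<forall>a<A i. p j i a x \<ge> 0) \<and> (\<Sum>a<A i. p j i a x) = 1) \<and>
        (\<forall>a\<in>cfg n A. \<forall>x\<in>cfg n X.
           \<sigma> a x = (\<Sum>j<m. (q j * (\<Prod>i<n. p j i (a i) (x i))) *\<^sub>R \<rho> j)))"

definition on_edge ::
  "nat \<Rightarrow> (nat \<Rightarrow> nat) \<Rightarrow> (nat \<Rightarrow> nat) \<Rightarrow> 'd::finite assemblage \<Rightarrow> bool" where
  "on_edge n A X \<sigma> \<longleftrightarrow>
     (\<forall>(\<epsilon>::real) \<sigma>1 \<sigma>2. 0 \<le> \<epsilon> \<and> \<epsilon> \<le> 1 \<and> LHS n A X \<sigma>1 \<and> no_signaling n A X \<sigma>2 \<and>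
        (\<forall>a\<in>cfg n A. \<forall>x\<in>cfg n X. \<sigma> a x = \<epsilon> *\<^sub>R \<sigma>1 a x + (1 - \<epsilon>) *\<^sub>R \<sigma>2 a x)
        \<longrightarrow> \<epsilon> = 0)"

definition det_box :: "nat \<Rightarrow> (nat \<Rightarrow> nat) \<Rightarrow> (nat \<Rightarrow> nat) \<Rightarrow> (nat \<Rightarrow> nat \<Rightarrow> nat) \<Rightarrow> bool" where
  "det_box n A X f \<longleftrightarrow> (\<forall>i<n. \<forall>x<X i. f i x < A i)"

definition p_L :: "nat \<Rightarrow> (nat \<Rightarrow> nat \<Rightarrow> nat) \<Rightarrow> (nat \<Rightarrow> nat) \<Rightarrow> (nat \<Rightarrow> nat) \<Rightarrow> real" where
  "p_L n f a x = (\<Prod>i<n. if a i = f i (x i) then 1 else 0)"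

definition I_L :: "nat \<Rightarrow> (nat \<Rightarrow> nat) \<Rightarrow> (nat \<Rightarrow> nat) \<Rightarrow> (nat \<Rightarrow> nat \<Rightarrow> nat)
     \<Rightarrow> ((nat \<Rightarrow> nat) \<times> (nat \<Rightarrow> nat)) set" where
  "I_L n A X f = {(a, x). a \<in> cfg n A \<and> x \<in> cfg n X \<and> p_L n f a x \<noteq> 0}"

end

theory Submission
  imports Defs
begin

(* The row spaces of the operators sigma_{a|x}, (a|x) in I_L (rank is defined as the row rank),
   are |I_L| subspaces of C^d whose dimensions add up to more than (|I_L| - 1) d, so they have a
   common nonzero vector; since the operators are Hermitian, its conjugate v lies in the range of
   each of them.  If v = M w with M positive semidefinite, Cauchy-Schwarz gives
   |<u,v>|^2 <= <u,Mu> <w,Mw>, i.e. M >= t |v><v| for small t > 0.  Hence sigma_{a|x} >= eps rho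
   on I_L for the pure state rho = |v><v| / |v|^2 and some eps > 0.  The deterministic box L with
   local state rho is an LHS assemblage, and (Sigma - eps (L, rho)) / (1 - eps) is again
   no-signaling: it is positive on I_L by the choice of eps, elsewhere trivially, and its
   marginals are differences of marginals of two no-signaling assemblages. *)

definition cinner :: "complex^'n::finite \<Rightarrow> complex^'n \<Rightarrow> complex" where
  "cinner u v = (\<Sum>i\<in>UNIV. cnj (u$i) * v$i)"

lemma
  shows cinner_add_left: "cinner (u + u') v = cinner u v + cinner u' v"
    and cinner_add_right: "cinner u (v + v') = cinner u v + cinner u v'"
    and cinner_diff_left: "cinner (u - u') v = cinner u v - cinner u' v"
    and cinner_diff_right: "cinner u (v - v') = cinner u v - cinner u v'"
    and cinner_scale_left: "cinner (c *s u) v = cnj c * cinner u v"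
    and cinner_scale_right: "cinner u (c *s v) = c * cinner u v"
  by (simp_all add: cinner_def sum.distrib sum_subtractf sum_distrib_left algebra_simps)

lemma cinner_commute: "cinner v u = cnj (cinner u v)"
  by (simp add: cinner_def mult.commute)

lemma cinner_self: "cinner v v = of_real ((norm v)\<^sup>2)"
proof -
  have "cinner v v = of_real (\<Sum>i\<in>UNIV. (cmod (v$i))\<^sup>2)"
    unfolding cinner_def of_real_sum
    by (intro sum.cong refl) (metis complex_norm_square mult.commute of_real_power)
  then show ?thesis
    by (simp add: norm_vec_def L2_set_def sum_nonneg)
qed

lemma matrix_vector_mult_scale: "(M::'a::comm_ring_1^'n::finite^'m) *v (c *s v) = c *s (M *v v)"
  by (simp add: matrix_vector_mult_def vec_eq_iff sum_distrib_left algebra_simps)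

lemma scaleR_matrix_vector_mult: "(r *\<^sub>R (M::'n::finite cmat)) *v v = complex_of_real r *s (M *v v)"
  unfolding matrix_vector_mult_def
  by (simp add: vec_eq_iff sum_distrib_left) (simp add: scaleR_conv_of_real algebra_simps)

lemma trace_scaleR: "trace (r *\<^sub>R (M::'n::finite cmat)) = of_real r * trace M"
  unfolding trace_def by (simp add: sum_distrib_left) (simp add: scaleR_conv_of_real)

lemma psd_iff_cinner: "psd M \<longleftrightarrow> (\<forall>v. Im (cinner v (M *v v)) = 0 \<and> 0 \<le> Re (cinner v (M *v v)))"
  by (simp add: psd_def cinner_def Let_def)

lemma psd_cinner_real: "psd M \<Longrightarrow> cinner v (M *v v) = of_real (Re (cinner v (M *v v)))"
  by (simp add: psd_iff_cinner complex_eq_iff)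

lemma psd_cinner_commute:
  assumes "psd M"
  shows "cinner z (M *v y) = cnj (cinner y (M *v z))"
proof -
  have real: "\<And>v. Im (cinner v (M *v v)) = 0"
    using assms by (simp add: psd_iff_cinner)
  from real[of "y + z"] real[of y] real[of z]
  have "Im (cinner y (M *v z)) + Im (cinner z (M *v y)) = 0"
    by (simp add: cinner_add_left cinner_add_right matrix_vector_right_distrib)
  moreover from real[of "y + \<i> *s z"] real[of y] real[of z]
  have "Re (cinner y (M *v z)) - Re (cinner z (M *v y)) = 0"
    by (simp add: cinner_add_left cinner_add_right cinner_scale_left cinner_scale_right
        matrix_vector_right_distrib matrix_vector_mult_scale algebra_simps)
  ultimately show ?thesis
    by (simp add: complex_eq_iff)
qed

lemma le_product_if_quadratic_nonneg:
  fixes a c N :: real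
  assumes "\<And>t. 0 \<le> a - 2 * t * N + t\<^sup>2 * N * c" and "0 \<le> N" and "0 \<le> c"
  shows "N \<le> a * c"
proof (cases "c = 0")
  case True
  show ?thesis
  proof (rule ccontr)
    assume "\<not> N \<le> a * c"
    then have "N > 0"
      using True by simp
    have "0 \<le> a - 2 * ((a + 1) / (2 * N)) * N"
      using assms(1)[of "(a + 1) / (2 * N)"] True by simp
    also have "\<dots> = -1"
      using \<open>N > 0\<close> by (simp add: field_simps)
    finally show False
      by simp
  qed
next
  case False
  then have "c > 0"
    using assms(3) by simp
  have "0 \<le> a - 2 * (1 / c) * N + (1 / c)\<^sup>2 * N * c"
    by (rule assms(1))
  also have "\<dots> = (a * c - N) / c"
    using \<open>c > 0\<close> by (simp add: field_simps power2_eq_square)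
  finally show ?thesis
    using \<open>c > 0\<close> by (simp add: zero_le_divide_iff)
qed

lemma psd_cauchy_schwarz:
  assumes "psd M"
  shows "(cmod (cinner u (M *v w)))\<^sup>2 \<le> Re (cinner u (M *v u)) * Re (cinner w (M *v w))"
proof -
  define \<alpha> where "\<alpha> = cinner u (M *v w)"
  define a where "a = Re (cinner u (M *v u))"
  define c where "c = Re (cinner w (M *v w))"
  define N where "N = (cmod \<alpha>)\<^sup>2"
  have N_eq: "N = (Re \<alpha>)\<^sup>2 + (Im \<alpha>)\<^sup>2"
    by (simp add: N_def cmod_power2)
  have "c \<ge> 0"
    using assms by (simp add: psd_iff_cinner c_def)
  have quadratic: "0 \<le> a - 2 * t * N + t\<^sup>2 * N * c" for t :: real
  proof -
    define s where "s = of_real t * cnj \<alpha>"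
    have "0 \<le> Re (cinner (u - s *s w) (M *v (u - s *s w)))"
      using assms by (simp add: psd_iff_cinner)
    also have "cinner (u - s *s w) (M *v (u - s *s w))
        = cinner u (M *v u) - s * \<alpha> - cnj s * cnj \<alpha> + cnj s * s * cinner w (M *v w)"
      using psd_cinner_commute[OF assms, of w u]
      by (simp add: cinner_diff_left cinner_diff_right cinner_scale_left cinner_scale_right
          matrix_vector_mult_diff_distrib matrix_vector_mult_scale \<alpha>_def algebra_simps)
    also have "Re \<dots> = a - 2 * t * N + t\<^sup>2 * N * c"
      using psd_cinner_real[OF assms, of u] psd_cinner_real[OF assms, of w]
      by (simp add: s_def a_def c_def N_eq power2_eq_square algebra_simps)
    finally show ?thesis .
  qed
  then have "N \<le> a * c"
    using \<open>c \<ge> 0\<close> by (intro le_product_if_quadratic_nonneg) (simp_all add: N_def)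
  then show ?thesis
    by (simp add: N_def a_def c_def \<alpha>_def)
qed

lemma psd_zero: "psd 0"
  by (simp add: psd_iff_cinner cinner_def)

lemma psd_add: "psd M \<Longrightarrow> psd N \<Longrightarrow> psd (M + N)"
  by (simp add: psd_iff_cinner cinner_add_right matrix_vector_mult_add_rdistrib)

lemma psd_sum: "finite S \<Longrightarrow> (\<And>a. a \<in> S \<Longrightarrow> psd (M a)) \<Longrightarrow> psd (\<Sum>a\<in>S. M a)"
  by (induction S rule: finite_induct) (auto simp: psd_zero psd_add)

lemma psd_scaleR: "psd M \<Longrightarrow> 0 \<le> r \<Longrightarrow> psd (r *\<^sub>R M)"
  by (simp add: psd_iff_cinner scaleR_matrix_vector_mult cinner_scale_right)

definition outer :: "complex^'n::finite \<Rightarrow> 'n cmat" where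
  "outer v = (\<chi> i j. v$i * cnj (v$j))"

lemma outer_mult_vector: "outer v *v w = cinner v w *s v"
  by (simp add: outer_def cinner_def matrix_vector_mult_def vec_eq_iff sum_distrib_left algebra_simps)

lemma cinner_outer: "cinner u (outer v *v u) = of_real ((cmod (cinner u v))\<^sup>2)"
  unfolding complex_norm_square
  by (simp add: outer_mult_vector cinner_scale_right cinner_commute[of v u] mult.commute)

lemma trace_outer: "trace (outer v) = of_real ((norm v)\<^sup>2)"
proof -
  have "trace (outer v) = cinner v v"
    by (simp add: trace_def outer_def cinner_def mult.commute)
  then show ?thesis
    by (simp only: cinner_self)
qed

lemma psd_outer: "psd (outer v)"
  by (simp add: psd_iff_cinner cinner_outer)

lemma psd_diff_outer:
  assumes "psd M" and "M *v w = v" and "0 \<le> t" and "t * Re (cinner w (M *v w)) \<le> 1"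
  shows "psd (M - t *\<^sub>R outer v)"
  unfolding psd_iff_cinner
proof
  fix u
  have real: "Im (cinner u (M *v u)) = 0" and nonneg: "0 \<le> Re (cinner u (M *v u))"
    using assms(1) by (auto simp: psd_iff_cinner)
  have "t * (cmod (cinner u v))\<^sup>2 \<le> t * (Re (cinner u (M *v u)) * Re (cinner w (M *v w)))"
    using psd_cauchy_schwarz[OF assms(1), of u w] assms(2,3) by (simp add: mult_left_mono)
  also have "\<dots> = Re (cinner u (M *v u)) * (t * Re (cinner w (M *v w)))"
    by simp
  also have "\<dots> \<le> Re (cinner u (M *v u))"
    using nonneg assms(4) by (simp add: mult_left_le)
  finally show "Im (cinner u ((M - t *\<^sub>R outer v) *v u)) = 0
      \<and> 0 \<le> Re (cinner u ((M - t *\<^sub>R outer v) *v u))"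
    using real by (simp add: matrix_vector_mult_diff_rdistrib cinner_diff_right
        scaleR_matrix_vector_mult cinner_scale_right cinner_outer)
qed

lemma cinner_axis_left: "cinner (axis i 1) v = v$i"
proof -
  have "cinner (axis i 1) v = (\<Sum>k\<in>UNIV. if k = i then v$k else 0)"
    unfolding cinner_def by (intro sum.cong) (auto simp: axis_def)
  then show ?thesis
    by simp
qed

lemma psd_entry_cnj:
  assumes "psd M"
  shows "M$j$i = cnj (M$i$j)"
proof -
  have entry: "cinner (axis i 1) (M *v axis j 1) = M$i$j" for i j
    unfolding cinner_axis_left by (simp add: matrix_vector_mult_def axis_def flip: of_bool_def)
  show ?thesis
    using psd_cinner_commute[OF assms, of "axis j 1" "axis i 1"] by (simp add: entry)
qed

lemma span_rows_subset_range: "vec.span (rows M) \<subseteq> range (\<lambda>x. x v* M)"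
proof (rule vec.span_minimal)
  have "row i M = axis i 1 v* M" for i
    by (simp add: row_def vector_matrix_mult_def vec_eq_iff axis_def flip: of_bool_def)
  then show "rows M \<subseteq> range (\<lambda>x. x v* M)"
    by (auto simp: rows_def)
  have "range (\<lambda>x. x v* M) = range ((*v) (transpose M))"
    by simp
  then show "vec.subspace (range (\<lambda>x. x v* M))"
    using vec.linear_subspace_image[OF matrix_vector_mul_linear_gen vec.subspace_UNIV,
        of "transpose M"] by simp
qed

lemma psd_rowspace_cnj_in_range:
  assumes "psd M" and "u \<in> vec.span (rows M)"
  shows "(\<chi> j. cnj (u$j)) \<in> range ((*v) M)"
proof -
  obtain x where u: "u = x v* M"
    using span_rows_subset_range assms(2) by blast
  have "(M *v (\<chi> i. cnj (x$i)))$j = cnj (u$j)" for j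
  proof -
    have "(M *v (\<chi> i. cnj (x$i)))$j = (\<Sum>i\<in>UNIV. M$j$i * cnj (x$i))"
      by (simp add: matrix_vector_mult_def)
    also have "\<dots> = (\<Sum>i\<in>UNIV. cnj (M$i$j) * cnj (x$i))"
      using psd_entry_cnj[OF assms(1), of j] by simp
    also have "\<dots> = cnj (u$j)"
      by (simp add: u vector_matrix_mult_def mult.commute)
    finally show ?thesis .
  qed
  then have "M *v (\<chi> i. cnj (x$i)) = (\<chi> j. cnj (u$j))"
    by (simp add: vec_eq_iff)
  then show ?thesis
    by (metis rangeI)
qed

lemma dim_INT_subspaces_ge:
  fixes S :: "'k \<Rightarrow> ('a::field^'n) set"
  assumes "finite K" and "\<forall>k\<in>K. vec.subspace (S k)"
  shows "int (vec.dim (\<Inter>k\<in>K. S k))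
    \<ge> (\<Sum>k\<in>K. int (vec.dim (S k))) - int (card K) * int CARD('n) + int CARD('n)"
  using assms
proof (induction K rule: finite_induct)
  case empty
  then show ?case
    using vec_dim_card[where 'a='a and 'n='n] by simp
next
  case (insert k K)
  define T where "T = (\<Inter>k\<in>K. S k)"
  have "vec.subspace T" and "vec.subspace (S k)"
    using insert.prems unfolding T_def by (auto intro: vec.subspace_Inter)
  then have "vec.dim {x + y |x y. x \<in> S k \<and> y \<in> T} + vec.dim (S k \<inter> T)
      = vec.dim (S k) + vec.dim T"
    by (rule vec.dim_sums_Int[rotated])
  moreover have "vec.dim {x + y |x y. x \<in> S k \<and> y \<in> T} \<le> CARD('n)"
    by (rule dim_subset_UNIV_cart_gen)
  moreover have "int (vec.dim T)
      \<ge> (\<Sum>k\<in>K. int (vec.dim (S k))) - int (card K) * int CARD('n) + int CARD('n)"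
    using insert.IH insert.prems by (simp add: T_def)
  ultimately show ?case
    using insert.hyps by (simp add: T_def algebra_simps)
qed

lemma common_range_vector:
  fixes M :: "'k \<Rightarrow> 'n::finite cmat"
  assumes "finite K" and "\<forall>k\<in>K. psd (M k)"
    and "real (\<Sum>k\<in>K. rank (M k)) > (real (card K) - 1) * real CARD('n)"
  shows "\<exists>v. v \<noteq> 0 \<and> (\<forall>k\<in>K. v \<in> range ((*v) (M k)))"
proof -
  define S where "S k = vec.span (rows (M k))" for k
  have "int (vec.dim (\<Inter>k\<in>K. S k))
      \<ge> (\<Sum>k\<in>K. int (rank (M k))) - int (card K) * int CARD('n) + int CARD('n)"
    using dim_INT_subspaces_ge[OF assms(1), of S]
    by (simp add: S_def vec.subspace_span row_rank_def_gen)
  moreover have "(\<Sum>k\<in>K. int (rank (M k))) - int (card K) * int CARD('n) + int CARD('n) > 0"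
  proof -
    have "real_of_int ((\<Sum>k\<in>K. int (rank (M k))) - int (card K) * int CARD('n) + int CARD('n)) > 0"
      using assms(3) by (simp add: algebra_simps)
    then show ?thesis
      by (simp only: of_int_0_less_iff)
  qed
  ultimately have "vec.dim (\<Inter>k\<in>K. S k) \<noteq> 0"
    by linarith
  then have "\<not> (\<Inter>k\<in>K. S k) \<subseteq> {0}"
    by simp
  then obtain u where "u \<noteq> 0" and u: "\<forall>k\<in>K. u \<in> S k"
    by blast
  define v where "v = (\<chi> j. cnj (u$j))"
  have "v \<noteq> 0"
    using \<open>u \<noteq> 0\<close> by (auto simp: v_def vec_eq_iff)
  moreover have "\<forall>k\<in>K. v \<in> range ((*v) (M k))"
    using assms(2) u by (auto simp: v_def S_def intro: psd_rowspace_cnj_in_range)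
  ultimately show ?thesis
    by blast
qed

lemma common_state_below:
  fixes M :: "'k \<Rightarrow> 'n::finite cmat"
  assumes "finite K" and "\<forall>k\<in>K. psd (M k)" and "v \<noteq> 0"
    and "\<forall>k\<in>K. v \<in> range ((*v) (M k))"
  shows "\<exists>\<rho> \<epsilon>. density \<rho> \<and> 0 < \<epsilon> \<and> \<epsilon> < 1 \<and> (\<forall>k\<in>K. psd (M k - \<epsilon> *\<^sub>R \<rho>))"
proof -
  have "\<forall>k\<in>K. \<exists>w. M k *v w = v"
    using assms(4) by (auto simp: image_iff eq_commute)
  then obtain w where w: "\<And>k. k \<in> K \<Longrightarrow> M k *v w k = v"
    by metis
  define c where "c k = Re (cinner (w k) (M k *v w k))" for k
  have c_nonneg: "c k \<ge> 0" if "k \<in> K" for k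
    using assms(2) that by (simp add: c_def psd_iff_cinner)
  define C where "C = (\<Sum>k\<in>K. c k)"
  have "C \<ge> 0"
    unfolding C_def using c_nonneg by (simp add: sum_nonneg)
  define \<tau> where "\<tau> = (norm v)\<^sup>2"
  have "\<tau> > 0"
    using assms(3) by (simp add: \<tau>_def)
  define \<rho> where "\<rho> = (1 / \<tau>) *\<^sub>R outer v"
  define \<epsilon> where "\<epsilon> = \<tau> / (2 * \<tau> + C)"
  have "density \<rho>"
    using \<open>\<tau> > 0\<close>
    by (simp add: density_def \<rho>_def \<tau>_def psd_scaleR psd_outer trace_scaleR trace_outer)
  moreover have "0 < \<epsilon>" and "\<epsilon> < 1"
    using \<open>\<tau> > 0\<close> \<open>C \<ge> 0\<close> by (auto simp: \<epsilon>_def field_simps)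
  moreover have "psd (M k - \<epsilon> *\<^sub>R \<rho>)" if "k \<in> K" for k
  proof -
    have "c k \<le> C"
      unfolding C_def using assms(1) that c_nonneg by (intro member_le_sum) auto
    then have "c k / (2 * \<tau> + C) \<le> 1"
      using \<open>\<tau> > 0\<close> \<open>C \<ge> 0\<close> by (simp add: divide_le_eq)
    moreover have "\<epsilon> / \<tau> = 1 / (2 * \<tau> + C)"
      using \<open>\<tau> > 0\<close> by (simp add: \<epsilon>_def)
    ultimately have "(\<epsilon> / \<tau>) * c k \<le> 1"
      by simp
    moreover have "0 \<le> \<epsilon> / \<tau>"
      using \<open>0 < \<epsilon>\<close> \<open>\<tau> > 0\<close> by simp
    ultimately have "psd (M k - (\<epsilon> / \<tau>) *\<^sub>R outer v)"
      using psd_diff_outer[of "M k" "w k" v] assms(2) that w by (simp add: c_def)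
    then show ?thesis
      by (simp add: \<rho>_def)
  qed
  ultimately show ?thesis
    by blast
qed

lemma finite_cfg: "finite (cfg n B)"
proof -
  have "cfg n B \<subseteq> (\<lambda>g i. if i < n then g i else 0) ` (PiE {..<n} (\<lambda>i. {..<B i}))"
  proof
    fix c assume c: "c \<in> cfg n B"
    then have "c = (\<lambda>i. if i < n then restrict c {..<n} i else 0)"
      by (auto simp: cfg_def)
    moreover have "restrict c {..<n} \<in> PiE {..<n} (\<lambda>i. {..<B i})"
      using c by (auto simp: cfg_def)
    ultimately show "c \<in> (\<lambda>g i. if i < n then g i else 0) ` (PiE {..<n} (\<lambda>i. {..<B i}))"
      by blast
  qed
  then show ?thesis
    by (rule finite_subset) (simp add: finite_PiE)
qed

lemma zero_in_cfg: "\<forall>i<n. 1 \<le> B i \<Longrightarrow> (\<lambda>_. 0) \<in> cfg n B"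
  by (auto simp: cfg_def)

lemma marginal_scaleR_diff:
  "marginal n A (\<lambda>b y. c *\<^sub>R (\<sigma> b y - e *\<^sub>R \<tau> b y)) I a x
    = c *\<^sub>R (marginal n A \<sigma> I a x - e *\<^sub>R marginal n A \<tau> I a x)"
  by (simp add: marginal_def scaleR_sum_right sum_subtractf scaleR_right_diff_distrib)

lemma
  assumes "no_signaling n A X \<sigma>"
  shows no_signaling_psd: "\<forall>a\<in>cfg n A. \<forall>x\<in>cfg n X. psd (\<sigma> a x)"
    and no_signaling_reduced_state: "\<exists>\<rho>. density \<rho> \<and> (\<forall>x\<in>cfg n X. (\<Sum>a\<in>cfg n A. \<sigma> a x) = \<rho>)"
  using assms unfolding no_signaling_def by blast+

lemma no_signaling_marginal:
  assumes "no_signaling n A X \<sigma>"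
    and "I \<subseteq> {0..<n}" and "1 \<le> card I" and "card I < n"
    and "a \<in> cfg n A" and "a' \<in> cfg n A" and "x \<in> cfg n X" and "x' \<in> cfg n X"
    and "\<forall>i\<in>I. a i = a' i \<and> x i = x' i"
  shows "marginal n A \<sigma> I a x = marginal n A \<sigma> I a' x'"
  using assms unfolding no_signaling_def by blast

lemma no_signaling_rescaled_diff:
  fixes \<sigma> \<tau> :: "'d::finite assemblage"
  assumes "no_signaling n A X \<sigma>" and "no_signaling n A X \<tau>"
    and "0 \<le> \<epsilon>" and "\<epsilon> < 1" and "cfg n X \<noteq> {}"
    and "\<forall>a\<in>cfg n A. \<forall>x\<in>cfg n X. psd (\<sigma> a x - \<epsilon> *\<^sub>R \<tau> a x)"
  shows "no_signaling n A X (\<lambda>a x. (1 / (1 - \<epsilon>)) *\<^sub>R (\<sigma> a x - \<epsilon> *\<^sub>R \<tau> a x))"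
    (is "no_signaling n A X ?\<sigma>'")
proof -
  obtain \<rho> where \<rho>: "density \<rho>" "\<forall>x\<in>cfg n X. (\<Sum>a\<in>cfg n A. \<sigma> a x) = \<rho>"
    using no_signaling_reduced_state[OF assms(1)] by blast
  obtain \<rho>' where \<rho>': "density \<rho>'" "\<forall>x\<in>cfg n X. (\<Sum>a\<in>cfg n A. \<tau> a x) = \<rho>'"
    using no_signaling_reduced_state[OF assms(2)] by blast
  have psd': "\<forall>a\<in>cfg n A. \<forall>x\<in>cfg n X. psd (?\<sigma>' a x)"
    using assms(4,6) by (simp add: psd_scaleR)
  define \<rho>'' where "\<rho>'' = (1 / (1 - \<epsilon>)) *\<^sub>R (\<rho> - \<epsilon> *\<^sub>R \<rho>')"
  have sum': "\<forall>x\<in>cfg n X. (\<Sum>a\<in>cfg n A. ?\<sigma>' a x) = \<rho>''"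
    using \<rho>(2) \<rho>'(2)
    by (simp add: \<rho>''_def scaleR_sum_right[symmetric] sum_subtractf)
  obtain x0 where x0: "x0 \<in> cfg n X"
    using assms(5) by blast
  have "\<rho>'' = (\<Sum>a\<in>cfg n A. ?\<sigma>' a x0)"
    using sum' x0 by simp
  also have "psd \<dots>"
    using psd' x0 by (intro psd_sum finite_cfg) auto
  finally have "density \<rho>''"
    using \<rho>(1) \<rho>'(1) assms(4)
    by (simp add: \<rho>''_def density_def trace_scaleR trace_sub field_simps)
  have marginal': "marginal n A ?\<sigma>' I a x = marginal n A ?\<sigma>' I a' x'"
    if "I \<subseteq> {0..<n} \<and> 1 \<le> card I \<and> card I < n" and "a \<in> cfg n A" "a' \<in> cfg n A"
      and "x \<in> cfg n X" "x' \<in> cfg n X" and "\<forall>i\<in>I. a i = a' i \<and> x i = x' i" for I a a' x x'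
  proof -
    have "marginal n A \<sigma> I a x = marginal n A \<sigma> I a' x'"
      using no_signaling_marginal[OF assms(1)] that by blast
    moreover have "marginal n A \<tau> I a x = marginal n A \<tau> I a' x'"
      using no_signaling_marginal[OF assms(2)] that by blast
    ultimately show ?thesis
      by (simp only: marginal_scaleR_diff)
  qed
  show ?thesis
    unfolding no_signaling_def
  proof (intro conjI)
    show "\<forall>a\<in>cfg n A. \<forall>x\<in>cfg n X. psd (?\<sigma>' a x)"
      by (fact psd')
    show "\<exists>\<rho>. density \<rho> \<and> (\<forall>x\<in>cfg n X. (\<Sum>a\<in>cfg n A. ?\<sigma>' a x) = \<rho>)"
      using \<open>density \<rho>''\<close> sum' by blast
  qed (use marginal' in blast)
qed

lemma not_on_edge_if_LHS_part:
  fixes \<sigma> \<tau> :: "'d::finite assemblage"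
  assumes "no_signaling n A X \<sigma>" and "LHS n A X \<tau>" and "no_signaling n A X \<tau>"
    and "0 < \<epsilon>" and "\<epsilon> < 1" and "cfg n X \<noteq> {}"
    and "\<forall>a\<in>cfg n A. \<forall>x\<in>cfg n X. psd (\<sigma> a x - \<epsilon> *\<^sub>R \<tau> a x)"
  shows "\<not> on_edge n A X \<sigma>"
proof -
  define \<sigma>' where "\<sigma>' a x = (1 / (1 - \<epsilon>)) *\<^sub>R (\<sigma> a x - \<epsilon> *\<^sub>R \<tau> a x)" for a x
  have "no_signaling n A X \<sigma>'"
    unfolding \<sigma>'_def using assms by (intro no_signaling_rescaled_diff) auto
  moreover have "\<sigma> a x = \<epsilon> *\<^sub>R \<tau> a x + (1 - \<epsilon>) *\<^sub>R \<sigma>' a x" for a x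
    using assms(5) by (simp add: \<sigma>'_def)
  ultimately have "\<not> (0 \<le> \<epsilon> \<and> \<epsilon> \<le> 1 \<and> LHS n A X \<tau> \<and> no_signaling n A X \<sigma>' \<and>
      (\<forall>a\<in>cfg n A. \<forall>x\<in>cfg n X. \<sigma> a x = \<epsilon> *\<^sub>R \<tau> a x + (1 - \<epsilon>) *\<^sub>R \<sigma>' a x)
      \<longrightarrow> \<epsilon> = 0)"
    using assms(2,4,5) by simp
  then show ?thesis
    unfolding on_edge_def by blast
qed

definition det_output :: "nat \<Rightarrow> (nat \<Rightarrow> nat \<Rightarrow> nat) \<Rightarrow> (nat \<Rightarrow> nat) \<Rightarrow> (nat \<Rightarrow> nat)" where
  "det_output n f x = (\<lambda>i. if i < n then f i (x i) else 0)"

definition det_assemblage :: "nat \<Rightarrow> (nat \<Rightarrow> nat \<Rightarrow> nat) \<Rightarrow> 'd::finite cmat \<Rightarrow> 'd assemblage" where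
  "det_assemblage n f \<rho> a x = (if a = det_output n f x then \<rho> else 0)"

lemma det_output_in_cfg: "det_box n A X f \<Longrightarrow> x \<in> cfg n X \<Longrightarrow> det_output n f x \<in> cfg n A"
  by (auto simp: det_output_def cfg_def det_box_def)

lemma p_L_eq_indicator:
  assumes "a \<in> cfg n A"
  shows "p_L n f a x = (if a = det_output n f x then 1 else 0)"
proof (cases "a = det_output n f x")
  case False
  then obtain i where i: "a i \<noteq> det_output n f x i"
    by auto
  then have "i < n"
    using assms by (cases "i < n") (auto simp: det_output_def cfg_def)
  then show ?thesis
    using i False by (auto simp: p_L_def det_output_def intro!: prod_zero)
qed (simp add: p_L_def det_output_def)

lemma det_output_in_I_L:
  "det_box n A X f \<Longrightarrow> x \<in> cfg n X \<Longrightarrow> (det_output n f x, x) \<in> I_L n A X f"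
  using det_output_in_cfg[of n A X f x] by (simp add: I_L_def p_L_eq_indicator)

lemma LHS_det_assemblage:
  assumes "det_box n A X f" and "density \<rho>"
  shows "LHS n A X (det_assemblage n f \<rho>)"
  unfolding LHS_def
proof (intro exI conjI)
  let ?p = "\<lambda>j i a x. if a = f i x then 1 else (0::real)"
  show "\<forall>j<Suc 0. (1::real) \<ge> 0" and "(\<Sum>j<Suc 0. (1::real)) = 1" and "\<forall>j<Suc 0. density \<rho>"
    using assms(2) by simp_all
  show "\<forall>j<Suc 0. \<forall>i<n. \<forall>x<X i. (\<forall>a<A i. ?p j i a x \<ge> 0) \<and> (\<Sum>a<A i. ?p j i a x) = 1"
    using assms(1) by (simp add: det_box_def)
  show "\<forall>a\<in>cfg n A. \<forall>x\<in>cfg n X. det_assemblage n f \<rho> a x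
      = (\<Sum>j<Suc 0. (1 * (\<Prod>i<n. ?p j i (a i) (x i))) *\<^sub>R \<rho>)"
    using p_L_eq_indicator by (simp add: det_assemblage_def p_L_def)
qed

lemma marginal_det_assemblage:
  assumes "det_box n A X f" and "I \<subseteq> {0..<n}" and "x \<in> cfg n X"
  shows "marginal n A (det_assemblage n f \<rho>) I a x = (if \<forall>i\<in>I. f i (x i) = a i then \<rho> else 0)"
proof -
  have "(det_output n f x \<in> {b\<in>cfg n A. \<forall>i\<in>I. b i = a i}) = (\<forall>i\<in>I. f i (x i) = a i)"
    using det_output_in_cfg[OF assms(1,3)] assms(2) by (auto simp: det_output_def)
  then show ?thesis
    using finite_cfg by (simp add: marginal_def det_assemblage_def sum.delta')
qed

lemma no_signaling_det_assemblage:
  assumes "det_box n A X f" and "density \<rho>"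
  shows "no_signaling n A X (det_assemblage n f \<rho>)"
  unfolding no_signaling_def
proof (intro conjI)
  show "\<forall>a\<in>cfg n A. \<forall>x\<in>cfg n X. psd (det_assemblage n f \<rho> a x)"
    using assms(2) by (simp add: det_assemblage_def density_def psd_zero)
  show "\<exists>\<rho>'. density \<rho>' \<and> (\<forall>x\<in>cfg n X. (\<Sum>a\<in>cfg n A. det_assemblage n f \<rho> a x) = \<rho>')"
    using assms finite_cfg det_output_in_cfg by (auto simp: det_assemblage_def sum.delta')
  show "\<forall>I. I \<subseteq> {0..<n} \<and> 1 \<le> card I \<and> card I < n \<longrightarrow>
      (\<forall>a\<in>cfg n A. \<forall>a'\<in>cfg n A. \<forall>x\<in>cfg n X. \<forall>x'\<in>cfg n X.
         (\<forall>i\<in>I. a i = a' i \<and> x i = x' i) \<longrightarrow>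
         marginal n A (det_assemblage n f \<rho>) I a x = marginal n A (det_assemblage n f \<rho>) I a' x')"
    using assms(1) by (simp add: marginal_det_assemblage)
qed

theorem lemma3:
  fixes n :: nat and A X :: "nat \<Rightarrow> nat" and \<sigma> :: "'d::finite assemblage"
  assumes "n \<ge> 1" and "\<forall>i<n. A i \<ge> 1" and "\<forall>i<n. X i \<ge> 1"
    and "no_signaling n A X \<sigma>"
    and "\<exists>f. det_box n A X f \<and>
           real (\<Sum>(a, x)\<in>I_L n A X f. rank (\<sigma> a x))
             > (real (card (I_L n A X f)) - 1) * real CARD('d)"
  shows "\<not> on_edge n A X \<sigma>"
proof -
  obtain f where f: "det_box n A X f"
    and rank: "real (\<Sum>(a, x)\<in>I_L n A X f. rank (\<sigma> a x))
      > (real (card (I_L n A X f)) - 1) * real CARD('d)"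
    using assms(5) by blast
  let ?K = "I_L n A X f"
  have "?K \<subseteq> cfg n A \<times> cfg n X"
    by (auto simp: I_L_def)
  then have "finite ?K"
    by (rule finite_subset) (simp add: finite_cfg)
  have psd_K: "\<forall>k\<in>?K. psd (case_prod \<sigma> k)"
    using no_signaling_psd[OF assms(4)] by (auto simp: I_L_def)
  obtain v where "v \<noteq> 0" and "\<forall>k\<in>?K. v \<in> range ((*v) (case_prod \<sigma> k))"
    using common_range_vector[OF \<open>finite ?K\<close> psd_K] rank by (auto simp: split_beta)
  then obtain \<rho> \<epsilon> where \<rho>: "density \<rho>" and \<epsilon>: "0 < \<epsilon>" "\<epsilon> < 1"
    and below: "\<forall>k\<in>?K. psd (case_prod \<sigma> k - \<epsilon> *\<^sub>R \<rho>)"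
    using common_state_below[OF \<open>finite ?K\<close> psd_K] by blast
  have "psd (\<sigma> (det_output n f x) x - \<epsilon> *\<^sub>R \<rho>)" if "x \<in> cfg n X" for x
    using below det_output_in_I_L[OF f that] by fastforce
  then have "\<forall>a\<in>cfg n A. \<forall>x\<in>cfg n X. psd (\<sigma> a x - \<epsilon> *\<^sub>R det_assemblage n f \<rho> a x)"
    using no_signaling_psd[OF assms(4)] by (simp add: det_assemblage_def)
  then show ?thesis
    using not_on_edge_if_LHS_part[OF assms(4) LHS_det_assemblage[OF f \<rho>]
        no_signaling_det_assemblage[OF f \<rho>] \<epsilon>] zero_in_cfg[OF assms(3)]
    by blast
qed

end
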